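(* Let $(G,\boldsymbol{\gamma})$ be a reflection-Laman graph. Then its reduced graph $(G^*,\boldsymbol{\gamma})$ is a reflection-$(2,2)$ graph.
   Context: A colored graph $(G,\boldsymbol{\gamma})$ is a finite directed multigraph $G$ (self-loops and parallel edges allowed) with a color $\gamma_{ij}\in\mathbb{Z}/2\mathbb{Z}$ on each edge. $\rho:H_1(G,\mathbb{Z})\to\mathbb{Z}/2\mathbb{Z}$ sends a cycle to the sum of its edge colors; the $\rho$-image of a subgraph is the image of its cycles, trivial if $\{0\}$. For a subgraph $G'$: $n',m'$ are its numbers of vertices and edges, $c'$ (resp. $c'_0$) the number of its connected components with non-trivial (resp. trivial) $\rho$-image. With $n$ vertices and $m$ edges in $G$: $(G,\boldsymbol{\gamma})$ is reflection-Laman if $m=2n-1$ and every subgraph satisfies $m'\le 2n'-c'-3c'_0$; a Ross graph if $m=2n-2$ and every subgraph satisfies $m'\le 2n'-2c'-3c'_0$; a reflection-$(2,2)$ graph if $m=2n-1$ and every subgraph satisfies $m'\le 2n'-c'-2c'_0$. A Ross-circuit is a colored graph that becomes a Ross graph after removing any one of its edges. In a reflection-Laman graph, the subgraphs that are Ross-circuits, $G_1,\dots,G_t$, are pairwise vertex-disjoint. The reduced graph $(G^*,\boldsymbol{\gamma})$ is obtained by contracting each $G_k$ that is not already a single vertex with a self-loop (such a loop is necessarily colored $1$) into a new vertex $v_k$ (edges with one endpoint in $G_k$ are reattached to $v_k$ keeping their colors), removing all self-loops created in this process, and then adding a new self-loop colored $1$ at each new vertex $v_k$. *)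

theory Defs
  imports Main
begin

text \<open>A colored graph is given by a vertex set V, an edge set E (edges are abstract
  objects, so parallel edges and self-loops are allowed), head and tail maps
  hv, tv, and a color map col, where col e = True means color 1 in Z/2Z.\<close>

definition colored_graph :: "'v set \<Rightarrow> 'e set \<Rightarrow> ('e \<Rightarrow> 'v) \<Rightarrow> ('e \<Rightarrow> 'v) \<Rightarrow> bool" where
  "colored_graph V E hv tv \<longleftrightarrow> finite V \<and> finite E \<and> (\<forall>e\<in>E. hv e \<in> V \<and> tv e \<in> V)"

inductive walk :: "'e set \<Rightarrow> ('e \<Rightarrow> 'v) \<Rightarrow> ('e \<Rightarrow> 'v) \<Rightarrow> 'v \<Rightarrow> 'e list \<Rightarrow> 'v \<Rightarrow> bool"
  for F hv tv where
  walk_nil: "walk F hv tv u [] u"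
| walk_cons: "e \<in> F \<Longrightarrow> (hv e = u \<and> tv e = x) \<or> (tv e = u \<and> hv e = x) \<Longrightarrow>
     walk F hv tv x es w \<Longrightarrow> walk F hv tv u (e # es) w"

definition components :: "'v set \<Rightarrow> 'e set \<Rightarrow> ('e \<Rightarrow> 'v) \<Rightarrow> ('e \<Rightarrow> 'v) \<Rightarrow> 'v set set" where
  "components V' F hv tv = {{w \<in> V'. \<exists>es. walk F hv tv u es w} | u. u \<in> V'}"

text \<open>A component C of (V', F) has non-trivial rho-image iff some closed walk in it has
  odd color sum (closed walks represent all classes of H_1).\<close>
definition nontrivial_rho :: "'e set \<Rightarrow> ('e \<Rightarrow> 'v) \<Rightarrow> ('e \<Rightarrow> 'v) \<Rightarrow> ('e \<Rightarrow> bool) \<Rightarrow> 'v set \<Rightarrow> bool" where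
  "nontrivial_rho F hv tv col C \<longleftrightarrow>
     (\<exists>u\<in>C. \<exists>es. walk F hv tv u es u \<and> odd (length (filter col es)))"

definition c_nontriv :: "'v set \<Rightarrow> 'e set \<Rightarrow> ('e \<Rightarrow> 'v) \<Rightarrow> ('e \<Rightarrow> 'v) \<Rightarrow> ('e \<Rightarrow> bool) \<Rightarrow> nat" where
  "c_nontriv V' F hv tv col = card {C \<in> components V' F hv tv. nontrivial_rho F hv tv col C}"

definition c_triv :: "'v set \<Rightarrow> 'e set \<Rightarrow> ('e \<Rightarrow> 'v) \<Rightarrow> ('e \<Rightarrow> 'v) \<Rightarrow> ('e \<Rightarrow> bool) \<Rightarrow> nat" where
  "c_triv V' F hv tv col = card {C \<in> components V' F hv tv. \<not> nontrivial_rho F hv tv col C}"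

definition verts :: "'e set \<Rightarrow> ('e \<Rightarrow> 'v) \<Rightarrow> ('e \<Rightarrow> 'v) \<Rightarrow> 'v set" where
  "verts F hv tv = hv ` F \<union> tv ` F"

definition sparse_cond :: "int \<Rightarrow> int \<Rightarrow> 'e set \<Rightarrow> ('e \<Rightarrow> 'v) \<Rightarrow> ('e \<Rightarrow> 'v) \<Rightarrow> ('e \<Rightarrow> bool) \<Rightarrow> bool" where
  "sparse_cond a b E hv tv col \<longleftrightarrow>
     (\<forall>F. F \<subseteq> E \<and> F \<noteq> {} \<longrightarrow>
        int (card F) \<le> 2 * int (card (verts F hv tv))
           - a * int (c_nontriv (verts F hv tv) F hv tv col)
           - b * int (c_triv (verts F hv tv) F hv tv col))"

definition reflection_laman :: "'v set \<Rightarrow> 'e set \<Rightarrow> ('e \<Rightarrow> 'v) \<Rightarrow> ('e \<Rightarrow> 'v) \<Rightarrow> ('e \<Rightarrow> bool) \<Rightarrow> bool" where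
  "reflection_laman V E hv tv col \<longleftrightarrow> colored_graph V E hv tv \<and>
     int (card E) = 2 * int (card V) - 1 \<and> sparse_cond 1 3 E hv tv col"

definition ross_graph :: "'v set \<Rightarrow> 'e set \<Rightarrow> ('e \<Rightarrow> 'v) \<Rightarrow> ('e \<Rightarrow> 'v) \<Rightarrow> ('e \<Rightarrow> bool) \<Rightarrow> bool" where
  "ross_graph V E hv tv col \<longleftrightarrow> colored_graph V E hv tv \<and>
     int (card E) = 2 * int (card V) - 2 \<and> sparse_cond 2 3 E hv tv col"

definition reflection_22 :: "'v set \<Rightarrow> 'e set \<Rightarrow> ('e \<Rightarrow> 'v) \<Rightarrow> ('e \<Rightarrow> 'v) \<Rightarrow> ('e \<Rightarrow> bool) \<Rightarrow> bool" where
  "reflection_22 V E hv tv col \<longleftrightarrow> colored_graph V E hv tv \<and>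
     int (card E) = 2 * int (card V) - 1 \<and> sparse_cond 1 2 E hv tv col"

definition ross_circuit :: "'v set \<Rightarrow> 'e set \<Rightarrow> ('e \<Rightarrow> 'v) \<Rightarrow> ('e \<Rightarrow> 'v) \<Rightarrow> ('e \<Rightarrow> bool) \<Rightarrow> bool" where
  "ross_circuit V E hv tv col \<longleftrightarrow> E \<noteq> {} \<and> (\<forall>e\<in>E. ross_graph V (E - {e}) hv tv col)"

definition ross_circuit_subgraphs ::
  "'v set \<Rightarrow> 'e set \<Rightarrow> ('e \<Rightarrow> 'v) \<Rightarrow> ('e \<Rightarrow> 'v) \<Rightarrow> ('e \<Rightarrow> bool) \<Rightarrow> ('v set \<times> 'e set) set" where
  "ross_circuit_subgraphs V E hv tv col =
     {(V', E'). V' \<subseteq> V \<and> E' \<subseteq> E \<and> ross_circuit V' E' hv tv col}"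

definition contracted_sets :: "'v set \<Rightarrow> 'e set \<Rightarrow> ('e \<Rightarrow> 'v) \<Rightarrow> ('e \<Rightarrow> 'v) \<Rightarrow> ('e \<Rightarrow> bool) \<Rightarrow> 'v set set" where
  "contracted_sets V E hv tv col =
     {V'. \<exists>E'. (V', E') \<in> ross_circuit_subgraphs V E hv tv col \<and> \<not> (card V' = 1 \<and> card E' = 1)}"

text \<open>Vertices of the reduced graph are represented as sets of original vertices:
  a contracted circuit becomes its vertex set, every other vertex v becomes {v}.\<close>
definition red_cls :: "'v set \<Rightarrow> 'e set \<Rightarrow> ('e \<Rightarrow> 'v) \<Rightarrow> ('e \<Rightarrow> 'v) \<Rightarrow> ('e \<Rightarrow> bool) \<Rightarrow> 'v \<Rightarrow> 'v set" where
  "red_cls V E hv tv col v =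
     (if \<exists>C \<in> contracted_sets V E hv tv col. v \<in> C
      then (THE C. C \<in> contracted_sets V E hv tv col \<and> v \<in> C) else {v})"

definition red_V :: "'v set \<Rightarrow> 'e set \<Rightarrow> ('e \<Rightarrow> 'v) \<Rightarrow> ('e \<Rightarrow> 'v) \<Rightarrow> ('e \<Rightarrow> bool) \<Rightarrow> 'v set set" where
  "red_V V E hv tv col = red_cls V E hv tv col ` V"

text \<open>Edges of the reduced graph: original edges (Inl e), except those which are not
  self-loops but become self-loops by the contraction; plus a new self-loop Inr C,
  colored 1, at each new vertex C.\<close>
definition red_E :: "'v set \<Rightarrow> 'e set \<Rightarrow> ('e \<Rightarrow> 'v) \<Rightarrow> ('e \<Rightarrow> 'v) \<Rightarrow> ('e \<Rightarrow> bool) \<Rightarrow> ('e + 'v set) set" where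
  "red_E V E hv tv col =
     Inl ` {e \<in> E. hv e = tv e \<or> red_cls V E hv tv col (hv e) \<noteq> red_cls V E hv tv col (tv e)}
     \<union> Inr ` contracted_sets V E hv tv col"

definition red_hd :: "'v set \<Rightarrow> 'e set \<Rightarrow> ('e \<Rightarrow> 'v) \<Rightarrow> ('e \<Rightarrow> 'v) \<Rightarrow> ('e \<Rightarrow> bool) \<Rightarrow> ('e + 'v set) \<Rightarrow> 'v set" where
  "red_hd V E hv tv col = case_sum (\<lambda>e. red_cls V E hv tv col (hv e)) (\<lambda>C. C)"

definition red_tl :: "'v set \<Rightarrow> 'e set \<Rightarrow> ('e \<Rightarrow> 'v) \<Rightarrow> ('e \<Rightarrow> 'v) \<Rightarrow> ('e \<Rightarrow> bool) \<Rightarrow> ('e + 'v set) \<Rightarrow> 'v set" where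
  "red_tl V E hv tv col = case_sum (\<lambda>e. red_cls V E hv tv col (tv e)) (\<lambda>C. C)"

definition red_col :: "('e \<Rightarrow> bool) \<Rightarrow> ('e + 'v set) \<Rightarrow> bool" where
  "red_col col = case_sum col (\<lambda>_. True)"

end

(*
  A Ross-circuit X of a reflection-Laman graph has 2|X| - 1 edges, contains every edge of G
  induced on X (adding one would violate the count 2n' - 1), has no self-loop, and two distinct
  circuits cannot meet: otherwise their union would have too many edges, because their
  intersection is a proper subgraph of a circuit and thus satisfies the Ross count 2n' - 2.
  Contracting a circuit therefore removes |X| - 1 vertices and 2|X| - 2 edges (counting the new
  loop), which preserves m = 2n - 1.

  For the sparsity count it suffices to bound the edges of each connected component C of a
  subgraph K of the reduced graph. Lifting K back to G (its original edges together with the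
  circuits of the contracted vertices in C) gives a subgraph of G whose count 2n' - 1 translates
  into |K| <= 2|C| - 1. If C has trivial rho-image it carries no new loop (they have colour 1);
  then either C contains a contracted vertex, which saves an edge, or the lift is a subgraph of G
  with trivial rho-image, for which the reflection-Laman count 2n' - 3 applies.
*)

theory Submission
  imports Defs
begin

section \<open>Walks and connected components\<close>

lemma walk_append: "walk F h t u es v \<Longrightarrow> walk F h t v fs w \<Longrightarrow> walk F h t u (es @ fs) w"
  by (induction rule: walk.induct) (auto intro: walk.intros)

lemma walk_rev: "walk F h t u es w \<Longrightarrow> walk F h t w (rev es) u"
proof (induction rule: walk.induct)
  case (walk_cons e u x es w)
  then have "walk F h t x [e] u" by (auto intro: walk.intros)
  with walk_cons.IH show ?case by (auto dest: walk_append)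
qed (auto intro: walk.intros)

lemma walk_mono: "walk F h t u es w \<Longrightarrow> F \<subseteq> F' \<Longrightarrow> walk F' h t u es w"
  by (induction rule: walk.induct) (auto intro: walk.intros)

lemma walk_map:
  assumes "walk F h t u es w"
    and "\<And>e. e \<in> F \<Longrightarrow> g e \<in> F' \<and> h' (g e) = \<phi> (h e) \<and> t' (g e) = \<phi> (t e)"
  shows "walk F' h' t' (\<phi> u) (map g es) (\<phi> w)"
  using assms by (induction rule: walk.induct) (auto intro: walk.intros)

definition reachable :: "'e set \<Rightarrow> ('e \<Rightarrow> 'v) \<Rightarrow> ('e \<Rightarrow> 'v) \<Rightarrow> 'v \<Rightarrow> 'v \<Rightarrow> bool" where
  "reachable F h t u w \<longleftrightarrow> (\<exists>es. walk F h t u es w)"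

lemma reachable_refl: "reachable F h t u u"
  unfolding reachable_def by (auto intro: walk.intros)

lemma reachable_sym: "reachable F h t u w \<Longrightarrow> reachable F h t w u"
  unfolding reachable_def by (auto dest: walk_rev)

lemma reachable_trans: "reachable F h t u v \<Longrightarrow> reachable F h t v w \<Longrightarrow> reachable F h t u w"
  unfolding reachable_def by (auto dest: walk_append)

lemma reachable_edge: "e \<in> F \<Longrightarrow> reachable F h t (h e) (t e)"
  unfolding reachable_def by (auto intro!: walk.intros)

lemma components_reachable: "components V' F h t = {{w \<in> V'. reachable F h t u w} | u. u \<in> V'}"
  unfolding components_def reachable_def ..

lemma component_eq:
  assumes "C \<in> components V' F h t" and "x \<in> C"
  shows "C = {w \<in> V'. reachable F h t x w}"
proof -
  obtain u where "C = {w \<in> V'. reachable F h t u w}"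
    using assms(1) unfolding components_reachable by blast
  moreover have "reachable F h t u x" "reachable F h t x u"
    using assms(2) calculation by (auto intro: reachable_sym)
  ultimately show ?thesis by (blast intro: reachable_trans)
qed

lemma component_subset: "C \<in> components V' F h t \<Longrightarrow> C \<subseteq> V'"
  unfolding components_reachable by blast

lemma component_nonempty: "C \<in> components V' F h t \<Longrightarrow> C \<noteq> {}"
  unfolding components_reachable by (auto intro: reachable_refl)

lemma component_closed:
  "C \<in> components V' F h t \<Longrightarrow> x \<in> C \<Longrightarrow> y \<in> V' \<Longrightarrow> reachable F h t x y \<Longrightarrow> y \<in> C"
  by (metis (no_types, lifting) component_eq mem_Collect_eq)

lemma components_disjoint: "pairwise disjnt (components V' F h t)"
proof (rule pairwiseI)
  fix C D assume C: "C \<in> components V' F h t" and D: "D \<in> components V' F h t" and "C \<noteq> D"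
  have False if "x \<in> C" "x \<in> D" for x
    using component_eq[OF C \<open>x \<in> C\<close>] component_eq[OF D \<open>x \<in> D\<close>] \<open>C \<noteq> D\<close> by simp
  then show "disjnt C D"
    unfolding disjnt_def by blast
qed

lemma Union_components: "\<Union>(components V' F h t) = V'"
proof
  show "\<Union>(components V' F h t) \<subseteq> V'"
    using component_subset by (rule Union_least)
  show "V' \<subseteq> \<Union>(components V' F h t)"
  proof
    fix u assume "u \<in> V'"
    then have "{w \<in> V'. reachable F h t u w} \<in> components V' F h t"
      unfolding components_reachable by blast
    moreover have "u \<in> {w \<in> V'. reachable F h t u w}"
      using \<open>u \<in> V'\<close> reachable_refl by simp
    ultimately show "u \<in> \<Union>(components V' F h t)"
      by (rule UnionI)
  qed
qed

lemma finite_components: "finite V' \<Longrightarrow> finite (components V' F h t)"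
  by (rule finite_subset[of _ "Pow V'"]) (auto dest: component_subset)

lemma finite_verts: "finite F \<Longrightarrow> finite (verts F h t)"
  unfolding verts_def by simp

lemma verts_mono: "F \<subseteq> G \<Longrightarrow> verts F h t \<subseteq> verts G h t"
  unfolding verts_def by auto

lemma verts_Un: "verts (F \<union> G) h t = verts F h t \<union> verts G h t"
  unfolding verts_def by auto

lemma verts_empty_iff [simp]: "verts F h t = {} \<longleftrightarrow> F = {}"
  unfolding verts_def by auto

lemma verts_component_edges:
  assumes C: "C \<in> components (verts F h t) F h t"
  shows "verts {e \<in> F. h e \<in> C} h t = C"
proof
  have "t e \<in> C" if "e \<in> F" "h e \<in> C" for e
    using component_closed[OF C \<open>h e \<in> C\<close> _ reachable_edge[OF \<open>e \<in> F\<close>]] that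
    by (auto simp: verts_def)
  then show "verts {e \<in> F. h e \<in> C} h t \<subseteq> C"
    unfolding verts_def by blast
  have "h e \<in> C" if "e \<in> F" "t e \<in> C" for e
    using component_closed[OF C \<open>t e \<in> C\<close> _ reachable_sym[OF reachable_edge[OF \<open>e \<in> F\<close>]]] that
    by (auto simp: verts_def)
  then show "C \<subseteq> verts {e \<in> F. h e \<in> C} h t"
    using component_subset[OF C] unfolding verts_def by blast
qed

section \<open>Counting with the sparsity condition\<close>

lemma components_nonempty:
  assumes "F \<noteq> {}" shows "components (verts F h t) F h t \<noteq> {}"
  using Union_components[of "verts F h t" F h t] assms by (metis Union_empty verts_empty_iff)

lemma c_nontriv_add_c_triv:
  assumes "finite V'"
  shows "c_nontriv V' F h t col + c_triv V' F h t col = card (components V' F h t)"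
proof -
  let ?CS = "components V' F h t" and ?P = "nontrivial_rho F h t col"
  have "card ?CS = card ({C \<in> ?CS. ?P C} \<union> {C \<in> ?CS. \<not> ?P C})"
    by (rule arg_cong[where f = card]) blast
  also have "\<dots> = card {C \<in> ?CS. ?P C} + card {C \<in> ?CS. \<not> ?P C}"
    by (rule card_Un_disjoint) (use finite_components[OF assms, of F h t] in auto)
  finally show ?thesis
    unfolding c_nontriv_def c_triv_def by simp
qed

lemma c_nontriv_add_c_triv_ge_1:
  assumes "finite F" "F \<noteq> {}"
  shows "c_nontriv (verts F h t) F h t col + c_triv (verts F h t) F h t col \<ge> 1"
  using c_nontriv_add_c_triv[of "verts F h t" F h t col] components_nonempty[OF assms(2), of h t]
    finite_components[of "verts F h t" F h t] finite_verts[OF assms(1), of h t]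
  by (simp add: card_gt_0_iff Suc_le_eq)

lemma sparse_cond_card_le:
  assumes "sparse_cond a b E h t col" "F \<subseteq> E" "F \<noteq> {}" "finite F" "0 \<le> a" "a \<le> b"
  shows "int (card F) \<le> 2 * int (card (verts F h t)) - a"
proof -
  let ?c = "int (c_nontriv (verts F h t) F h t col)"
  let ?d = "int (c_triv (verts F h t) F h t col)"
  have "?c + ?d \<ge> 1"
    using c_nontriv_add_c_triv_ge_1[OF \<open>finite F\<close> \<open>F \<noteq> {}\<close>, of h t col] by linarith
  then have "a * 1 \<le> a * (?c + ?d)"
    using \<open>0 \<le> a\<close> by (intro mult_left_mono) simp_all
  moreover have "a * ?d \<le> b * ?d"
    using \<open>a \<le> b\<close> by (rule mult_right_mono) simp
  moreover have "int (card F) \<le> 2 * int (card (verts F h t)) - a * ?c - b * ?d"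
    using assms(1-3) unfolding sparse_cond_def by blast
  ultimately show ?thesis
    by (simp add: distrib_left)
qed

lemma sparse_cond_card_le_trivial_rho:
  assumes "sparse_cond a b E h t col" "F \<subseteq> E" "F \<noteq> {}" "finite F" "0 \<le> b"
    and "\<not> nontrivial_rho F h t col (verts F h t)"
  shows "int (card F) \<le> 2 * int (card (verts F h t)) - b"
proof -
  have "{C \<in> components (verts F h t) F h t. nontrivial_rho F h t col C} = {}"
    using assms(6) component_subset unfolding nontrivial_rho_def by blast
  then have "c_nontriv (verts F h t) F h t col = 0"
    unfolding c_nontriv_def by (metis card.empty)
  moreover have "c_triv (verts F h t) F h t col \<ge> 1"
    using c_nontriv_add_c_triv_ge_1[OF \<open>finite F\<close> \<open>F \<noteq> {}\<close>, of h t col] calculation by linarith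
  moreover have "int (card F) \<le> 2 * int (card (verts F h t))
      - a * int (c_nontriv (verts F h t) F h t col) - b * int (c_triv (verts F h t) F h t col)"
    using assms(1-3) unfolding sparse_cond_def by blast
  moreover have "b * 1 \<le> b * int (c_triv (verts F h t) F h t col)"
    using \<open>0 \<le> b\<close> calculation(2) by (intro mult_left_mono) simp_all
  ultimately show ?thesis
    by simp
qed

lemma card_edges_by_components:
  assumes "finite F"
  shows "card F = (\<Sum>C\<in>components (verts F h t) F h t. card {e \<in> F. h e \<in> C})"
proof -
  let ?CS = "components (verts F h t) F h t"
  have "F = (\<Union>C\<in>?CS. {e \<in> F. h e \<in> C})"
    using Union_components[of "verts F h t" F h t] unfolding verts_def by blast
  also have "card \<dots> = (\<Sum>C\<in>?CS. card {e \<in> F. h e \<in> C})"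
  proof (rule card_UN_disjoint)
    show "finite ?CS"
      using finite_components finite_verts assms by blast
    show "\<forall>C\<in>?CS. \<forall>D\<in>?CS. C \<noteq> D \<longrightarrow> {e \<in> F. h e \<in> C} \<inter> {e \<in> F. h e \<in> D} = {}"
      using components_disjoint[of "verts F h t" F h t] unfolding pairwise_def disjnt_def by blast
  qed (use assms in simp)
  finally show ?thesis .
qed

lemma card_verts_by_components:
  assumes "finite F"
  shows "card (verts F h t) = (\<Sum>C\<in>components (verts F h t) F h t. card C)"
proof -
  have "card (\<Union>(components (verts F h t) F h t)) = (\<Sum>C\<in>components (verts F h t) F h t. card C)"
    using components_disjoint finite_verts[OF assms, of h t]
    by (intro card_Union_disjoint) (auto intro: finite_subset[OF component_subset])
  then show ?thesis
    by (simp add: Union_components)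
qed

lemma sparse_cond_12_by_components:
  assumes "finite E"
    and bound: "\<And>F C. F \<subseteq> E \<Longrightarrow> F \<noteq> {} \<Longrightarrow> C \<in> components (verts F h t) F h t \<Longrightarrow>
      int (card {e \<in> F. h e \<in> C}) \<le> 2 * int (card C) - (if nontrivial_rho F h t col C then 1 else 2)"
  shows "sparse_cond 1 2 E h t col"
  unfolding sparse_cond_def
proof (intro allI impI, elim conjE)
  fix F assume "F \<subseteq> E" "F \<noteq> {}"
  let ?CS = "components (verts F h t) F h t" and ?P = "nontrivial_rho F h t col"
  have "finite F"
    using \<open>F \<subseteq> E\<close> \<open>finite E\<close> by (rule finite_subset)
  have "int (card F) = (\<Sum>C\<in>?CS. int (card {e \<in> F. h e \<in> C}))"
    using card_edges_by_components[OF \<open>finite F\<close>, of h t] by simp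
  also have "\<dots> \<le> (\<Sum>C\<in>?CS. 2 * int (card C) - (if ?P C then 1 else 2))"
    by (intro sum_mono bound \<open>F \<subseteq> E\<close> \<open>F \<noteq> {}\<close>)
  also have "\<dots> = 2 * int (card (verts F h t)) - (\<Sum>C\<in>?CS. if ?P C then 1 else 2)"
    using card_verts_by_components[OF \<open>finite F\<close>, of h t]
    by (simp add: sum_subtractf sum_distrib_left)
  also have "(\<Sum>C\<in>?CS. if ?P C then 1 else 2 :: int)
      = int (c_nontriv (verts F h t) F h t col) + 2 * int (c_triv (verts F h t) F h t col)"
    using finite_components[OF finite_verts[OF \<open>finite F\<close>], of h t F h t]
    by (simp add: sum.If_cases Int_def c_nontriv_def c_triv_def)
  finally show "int (card F) \<le> 2 * int (card (verts F h t))
      - 1 * int (c_nontriv (verts F h t) F h t col) - 2 * int (c_triv (verts F h t) F h t col)"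
    by simp
qed

section \<open>Ross-circuits\<close>

lemma ross_circuit_finite:
  assumes "ross_circuit X E' h t col"
  shows "finite X" and "finite E'"
proof -
  obtain e where "e \<in> E'" "ross_graph X (E' - {e}) h t col"
    using assms unfolding ross_circuit_def by blast
  then show "finite X" "finite E'"
    unfolding ross_graph_def colored_graph_def by auto
qed

lemma ross_circuit_card_edges:
  assumes "ross_circuit X E' h t col"
  shows "int (card E') = 2 * int (card X) - 1"
proof -
  obtain e where "e \<in> E'" "ross_graph X (E' - {e}) h t col"
    using assms unfolding ross_circuit_def by blast
  then have "int (card (E' - {e})) = 2 * int (card X) - 2"
    unfolding ross_graph_def by blast
  moreover have "card E' = Suc (card (E' - {e}))"
    using card_Suc_Diff1[OF ross_circuit_finite(2)[OF assms] \<open>e \<in> E'\<close>] by simp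
  ultimately show ?thesis
    by linarith
qed

lemma ross_circuit_proper_subset_card_le:
  assumes "ross_circuit X E' h t col" "F \<subseteq> E'" "F \<noteq> E'" "F \<noteq> {}"
  shows "int (card F) \<le> 2 * int (card (verts F h t)) - 2"
proof -
  obtain e where "e \<in> E'" "e \<notin> F"
    using assms(2,3) by blast
  then have "sparse_cond 2 3 (E' - {e}) h t col" "F \<subseteq> E' - {e}"
    using assms(1,2) unfolding ross_circuit_def ross_graph_def by blast+
  then show ?thesis
    using sparse_cond_card_le[of 2 3 "E' - {e}" h t col F] assms(4)
      finite_subset[OF assms(2) ross_circuit_finite(2)[OF assms(1)]] by simp
qed

lemma ross_circuit_card_edges_ge_3:
  assumes "ross_circuit X E' h t col" "2 \<le> card X"
  shows "3 \<le> card E'"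
  using ross_circuit_card_edges[OF assms(1)] assms(2) by linarith

lemma ross_circuit_no_loop:
  assumes "ross_circuit X E' h t col" "2 \<le> card X" "e \<in> E'"
  shows "h e \<noteq> t e"
proof
  assume "h e = t e"
  have "{e} \<noteq> E'"
    using ross_circuit_card_edges_ge_3[OF assms(1,2)] by auto
  with ross_circuit_proper_subset_card_le[OF assms(1), of "{e}"] assms(3) \<open>h e = t e\<close>
  show False
    unfolding verts_def by simp
qed

lemma ross_circuit_endpoints:
  assumes "ross_circuit X E' h t col" "2 \<le> card X" "e \<in> E'"
  shows "h e \<in> X" and "t e \<in> X"
proof -
  have "\<not> E' \<subseteq> {e}"
  proof
    assume "E' \<subseteq> {e}"
    then have "card E' \<le> 1"
      using card_mono[of "{e}" E'] by simp
    with ross_circuit_card_edges_ge_3[OF assms(1,2)] show False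
      by simp
  qed
  then obtain e' where "e' \<in> E'" "e' \<noteq> e"
    by blast
  then have "colored_graph X (E' - {e'}) h t"
    using assms(1) unfolding ross_circuit_def ross_graph_def by blast
  then show "h e \<in> X" "t e \<in> X"
    using assms(3) \<open>e' \<noteq> e\<close> unfolding colored_graph_def by blast+
qed

section \<open>The reduced graph of a reflection-Laman graph\<close>

lemma red_col_comp_Inl [simp]: "red_col col \<circ> Inl = col"
  unfolding red_col_def by auto

locale reflection_laman_graph =
  fixes V :: "'v set" and E :: "'e set" and hv tv :: "'e \<Rightarrow> 'v" and col :: "'e \<Rightarrow> bool"
  assumes reflection_laman: "reflection_laman V E hv tv col"
begin

abbreviation contracted :: "'v set set" where
  "contracted \<equiv> contracted_sets V E hv tv col"

abbreviation cls :: "'v \<Rightarrow> 'v set" where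
  "cls \<equiv> red_cls V E hv tv col"

definition induced :: "'v set \<Rightarrow> 'e set" where
  "induced X = {e \<in> E. hv e \<in> X \<and> tv e \<in> X}"

lemma finite_V: "finite V"
  and finite_E: "finite E"
  and edge_endpoints: "e \<in> E \<Longrightarrow> hv e \<in> V \<and> tv e \<in> V"
  and card_E: "int (card E) = 2 * int (card V) - 1"
  and sparse_13: "sparse_cond 1 3 E hv tv col"
  using reflection_laman unfolding reflection_laman_def colored_graph_def by auto

lemma card_le_laman: "F \<subseteq> E \<Longrightarrow> F \<noteq> {} \<Longrightarrow> int (card F) \<le> 2 * int (card (verts F hv tv)) - 1"
  using sparse_cond_card_le[OF sparse_13, of F] finite_subset[OF _ finite_E] by simp

lemma induced_subset: "induced X \<subseteq> E"
  unfolding induced_def by blast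

lemma finite_induced: "finite (induced X)"
  using finite_subset[OF induced_subset finite_E] .

lemma verts_induced_subset: "verts (induced X) hv tv \<subseteq> X"
  unfolding induced_def verts_def by blast

lemma induced_Int: "induced (X \<inter> Y) = induced X \<inter> induced Y"
  unfolding induced_def by blast

lemma contracted_set_circuit:
  assumes "X \<in> contracted"
  shows "X \<subseteq> V" and "2 \<le> card X" and "ross_circuit X (induced X) hv tv col"
    and "verts (induced X) hv tv = X"
proof -
  obtain E' where "X \<subseteq> V" "E' \<subseteq> E" and circuit: "ross_circuit X E' hv tv col"
    and not_loop: "\<not> (card X = 1 \<and> card E' = 1)"
    using assms unfolding contracted_sets_def ross_circuit_subgraphs_def by blast
  have card_E': "int (card E') = 2 * int (card X) - 1"
    by (rule ross_circuit_card_edges[OF circuit])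
  show "X \<subseteq> V" by fact
  show "2 \<le> card X"
    using card_E' not_loop by (cases "card X = 1") auto
  then have ends: "verts E' hv tv \<subseteq> X"
    using ross_circuit_endpoints[OF circuit] unfolding verts_def by blast
  have "finite X"
    by (rule ross_circuit_finite(1)[OF circuit])
  have "E' \<noteq> {}"
    using circuit unfolding ross_circuit_def by blast
  then have "card X \<le> card (verts E' hv tv)"
    using card_le_laman[OF \<open>E' \<subseteq> E\<close>] card_E' by linarith
  then have verts_E': "verts E' hv tv = X"
    using card_subset_eq[OF \<open>finite X\<close> ends] card_mono[OF \<open>finite X\<close> ends] by linarith
  have "induced X \<subseteq> E'"
  proof
    fix e assume "e \<in> induced X"
    then have sub: "insert e E' \<subseteq> E" and vsub: "verts (insert e E') hv tv \<subseteq> X"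
      using \<open>E' \<subseteq> E\<close> ends unfolding induced_def verts_def by auto
    have "int (card (insert e E')) \<le> 2 * int (card (verts (insert e E') hv tv)) - 1"
      using card_le_laman[OF sub] by simp
    moreover have "card (verts (insert e E') hv tv) \<le> card X"
      by (rule card_mono[OF \<open>finite X\<close> vsub])
    ultimately have "card (insert e E') \<le> card E'"
      using card_E' by linarith
    then show "e \<in> E'"
      using ross_circuit_finite(2)[OF circuit] by (cases "e \<in> E'") auto
  qed
  moreover have "E' \<subseteq> induced X"
    using \<open>E' \<subseteq> E\<close> ends unfolding induced_def verts_def by blast
  ultimately have "E' = induced X"
    by blast
  then show "ross_circuit X (induced X) hv tv col" "verts (induced X) hv tv = X"
    using circuit verts_E' by simp_all
qed

lemma finite_contracted_set: "X \<in> contracted \<Longrightarrow> finite X"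
  using ross_circuit_finite(1)[OF contracted_set_circuit(3)] .

lemma card_induced_contracted:
  "X \<in> contracted \<Longrightarrow> int (card (induced X)) = 2 * int (card X) - 1"
  using ross_circuit_card_edges[OF contracted_set_circuit(3)] .

lemma card_induced_Int_le:
  assumes X: "X \<in> contracted" and Y: "Y \<in> contracted" and "X \<noteq> Y" "X \<inter> Y \<noteq> {}"
  shows "int (card (induced (X \<inter> Y))) \<le> 2 * int (card (X \<inter> Y)) - 2"
proof (cases "induced (X \<inter> Y) = {}")
  case True
  then show ?thesis
    using \<open>X \<inter> Y \<noteq> {}\<close> finite_contracted_set[OF X] by (simp add: Suc_le_eq card_gt_0_iff)
next
  case False
  have "induced (X \<inter> Y) \<noteq> induced X"
  proof
    assume eq: "induced (X \<inter> Y) = induced X"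
    then have sub: "induced X \<subseteq> induced Y"
      unfolding induced_Int by blast
    have ne: "induced X \<noteq> induced Y"
      using \<open>X \<noteq> Y\<close> contracted_set_circuit(4)[OF X] contracted_set_circuit(4)[OF Y] by metis
    have "induced X \<noteq> {}"
      using False eq by simp
    then have "int (card (induced X)) \<le> 2 * int (card (verts (induced X) hv tv)) - 2"
      by (rule ross_circuit_proper_subset_card_le[OF contracted_set_circuit(3)[OF Y] sub ne])
    then show False
      using card_induced_contracted[OF X] contracted_set_circuit(4)[OF X] by simp
  qed
  moreover have "induced (X \<inter> Y) \<subseteq> induced X"
    by (simp add: induced_Int)
  ultimately have "int (card (induced (X \<inter> Y))) \<le> 2 * int (card (verts (induced (X \<inter> Y)) hv tv)) - 2"
    using ross_circuit_proper_subset_card_le[OF contracted_set_circuit(3)[OF X]] False by blast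
  moreover have "card (verts (induced (X \<inter> Y)) hv tv) \<le> card (X \<inter> Y)"
    using card_mono[OF _ verts_induced_subset] finite_contracted_set[OF X] by simp
  ultimately show ?thesis
    by linarith
qed

lemma contracted_sets_disjoint:
  assumes X: "X \<in> contracted" and Y: "Y \<in> contracted" and "X \<inter> Y \<noteq> {}"
  shows "X = Y"
proof (rule ccontr)
  assume "X \<noteq> Y"
  have "induced X \<union> induced Y \<noteq> {}"
    using card_induced_contracted[OF X] contracted_set_circuit(2)[OF X] by auto
  moreover have "induced X \<union> induced Y \<subseteq> E"
    using induced_subset by simp
  ultimately have "int (card (induced X \<union> induced Y))
      \<le> 2 * int (card (verts (induced X \<union> induced Y) hv tv)) - 1"
    by (rule card_le_laman[rotated])
  then have "int (card (induced X \<union> induced Y)) \<le> 2 * int (card (X \<union> Y)) - 1"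
    by (simp add: verts_Un contracted_set_circuit(4)[OF X] contracted_set_circuit(4)[OF Y])
  moreover have "card (induced X) + card (induced Y)
      = card (induced X \<union> induced Y) + card (induced (X \<inter> Y))"
    using card_Un_Int[OF finite_induced finite_induced] by (simp add: induced_Int)
  moreover have "card X + card Y = card (X \<union> Y) + card (X \<inter> Y)"
    by (rule card_Un_Int[OF finite_contracted_set[OF X] finite_contracted_set[OF Y]])
  ultimately show False
    using card_induced_Int_le[OF X Y \<open>X \<noteq> Y\<close> \<open>X \<inter> Y \<noteq> {}\<close>]
      card_induced_contracted[OF X] card_induced_contracted[OF Y]
    by linarith
qed

lemma red_cls_contracted:
  assumes "X \<in> contracted" "v \<in> X"
  shows "cls v = X"
proof -
  have "(THE C. C \<in> contracted \<and> v \<in> C) = X"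
    using assms contracted_sets_disjoint by (intro the_equality) blast+
  then show ?thesis
    using assms unfolding red_cls_def by auto
qed

lemma red_cls_cases: "(cls v \<in> contracted \<and> v \<in> cls v) \<or> cls v = {v}"
proof (cases "\<exists>X\<in>contracted. v \<in> X")
  case True
  then obtain X where "X \<in> contracted" "v \<in> X"
    by blast
  then show ?thesis
    using red_cls_contracted by simp
next
  case False
  then show ?thesis
    unfolding red_cls_def by simp
qed

lemma mem_red_cls: "v \<in> cls v"
  using red_cls_cases[of v] by blast

lemma red_cls_eq:
  assumes "w \<in> cls u"
  shows "cls w = cls u"
proof (cases "cls u \<in> contracted")
  case True
  then show ?thesis
    using red_cls_contracted assms by blast
next
  case False
  then show ?thesis
    using red_cls_cases[of u] assms by simp
qed

lemma red_cls_eq_contracted: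
  assumes "cls u = cls v" "u \<noteq> v"
  shows "cls u \<in> contracted"
proof (rule ccontr)
  assume "cls u \<notin> contracted"
  then have "cls u = {u}"
    using red_cls_cases[of u] by simp
  then show False
    using mem_red_cls[of v] assms by simp
qed

lemma red_cls_not_contracted: "cls v \<notin> contracted \<Longrightarrow> cls v = {v}"
  using red_cls_cases[of v] by simp

lemma finite_red_cls: "finite (cls v)"
  using red_cls_not_contracted[of v] finite_contracted_set[of "cls v"] by (cases "cls v \<in> contracted") simp_all

lemma red_cls_subset: "v \<in> V \<Longrightarrow> cls v \<subseteq> V"
  using red_cls_not_contracted[of v] contracted_set_circuit(1)[of "cls v"] by (cases "cls v \<in> contracted") simp_all

lemma red_classes_disjoint: "pairwise disjnt (range cls)"
proof (rule pairwiseI)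
  fix X Y assume "X \<in> range cls" "Y \<in> range cls" "X \<noteq> Y"
  then obtain u w where X: "X = cls u" and Y: "Y = cls w"
    by blast
  have False if "x \<in> X" "x \<in> Y" for x
    using red_cls_eq[of x u] red_cls_eq[of x w] that X Y \<open>X \<noteq> Y\<close> by simp
  then show "disjnt X Y"
    unfolding disjnt_def by blast
qed

lemma contracted_subset_red_V: "contracted \<subseteq> red_V V E hv tv col"
proof
  fix X assume X: "X \<in> contracted"
  then obtain v where "v \<in> X"
    using contracted_set_circuit(2)[OF X] by (metis all_not_in_conv card.empty not_numeral_le_zero)
  then have "v \<in> V" "cls v = X"
    using red_cls_contracted[OF X] contracted_set_circuit(1)[OF X] by auto
  then show "X \<in> red_V V E hv tv col"
    unfolding red_V_def by (metis image_eqI)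
qed

lemma finite_contracted: "finite contracted"
proof -
  have "contracted \<subseteq> Pow V"
    using contracted_set_circuit(1) by blast
  then show ?thesis
    using finite_V by (meson finite_Pow_iff finite_subset)
qed

lemma card_Union_red_classes:
  assumes "finite \<C>" "\<C> \<subseteq> range cls"
  shows "card (\<Union>\<C>) = card (\<C> - contracted) + (\<Sum>X\<in>\<C> \<inter> contracted. card X)"
proof -
  have "card (\<Union>\<C>) = (\<Sum>X\<in>\<C>. card X)"
  proof (rule card_Union_disjoint)
    show "pairwise disjnt \<C>"
      using pairwise_subset[OF red_classes_disjoint assms(2)] .
    show "finite X" if "X \<in> \<C>" for X
      using that assms(2) finite_red_cls by blast
  qed
  also have "\<dots> = (\<Sum>X\<in>\<C> - contracted. card X) + (\<Sum>X\<in>\<C> \<inter> contracted. card X)"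
    using sum.Int_Diff[OF assms(1), of card contracted] by linarith
  also have "(\<Sum>X\<in>\<C> - contracted. card X) = (\<Sum>X\<in>\<C> - contracted. 1)"
  proof (rule sum.cong)
    fix X assume "X \<in> \<C> - contracted"
    then obtain v where "X = cls v" "cls v \<notin> contracted"
      using assms(2) by blast
    then show "card X = 1"
      using red_cls_not_contracted[of v] by simp
  qed simp
  finally show ?thesis
    by simp
qed

abbreviation Vr :: "'v set set" where "Vr \<equiv> red_V V E hv tv col"
abbreviation Er :: "('e + 'v set) set" where "Er \<equiv> red_E V E hv tv col"
abbreviation hr :: "'e + 'v set \<Rightarrow> 'v set" where "hr \<equiv> red_hd V E hv tv col"
abbreviation tr :: "'e + 'v set \<Rightarrow> 'v set" where "tr \<equiv> red_tl V E hv tv col"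
abbreviation colr :: "'e + 'v set \<Rightarrow> bool" where "colr \<equiv> red_col col"

lemma red_hd_tl_simps [simp]:
  "hr (Inl e) = cls (hv e)" "tr (Inl e) = cls (tv e)" "hr (Inr X) = X" "tr (Inr X) = X"
  unfolding red_hd_def red_tl_def by simp_all

definition kept_edges :: "'e set" where
  "kept_edges = {e \<in> E. hv e = tv e \<or> cls (hv e) \<noteq> cls (tv e)}"

lemma red_E_eq: "Er = Inl ` kept_edges \<union> Inr ` contracted"
  unfolding red_E_def kept_edges_def ..

lemma finite_kept_edges: "finite kept_edges"
  unfolding kept_edges_def using finite_E by simp

text \<open>Self-loops of G are kept even inside a contracted set, but no circuit contains one.\<close>

lemma kept_edges_Int_induced:
  assumes "X \<in> contracted"
  shows "kept_edges \<inter> induced X = {}"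
proof -
  have False if "e \<in> kept_edges" "e \<in> induced X" for e
  proof -
    have "cls (hv e) = X" "cls (tv e) = X"
      using that(2) red_cls_contracted[OF assms] unfolding induced_def by auto
    moreover have "hv e \<noteq> tv e"
      by (rule ross_circuit_no_loop[OF contracted_set_circuit(3,2)[OF assms] that(2)])
    ultimately show False
      using that(1) unfolding kept_edges_def by simp
  qed
  then show ?thesis
    by blast
qed

lemma induced_disjoint: "X \<in> contracted \<Longrightarrow> Y \<in> contracted \<Longrightarrow> X \<noteq> Y \<Longrightarrow> induced X \<inter> induced Y = {}"
  using contracted_sets_disjoint[of X Y] induced_Int[of X Y] unfolding induced_def by auto

lemma edges_eq_kept_Un_induced: "E = kept_edges \<union> \<Union>(induced ` contracted)"
proof
  show "kept_edges \<union> \<Union>(induced ` contracted) \<subseteq> E"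
    using induced_subset unfolding kept_edges_def by blast
  show "E \<subseteq> kept_edges \<union> \<Union>(induced ` contracted)"
  proof
    fix e assume "e \<in> E"
    show "e \<in> kept_edges \<union> \<Union>(induced ` contracted)"
    proof (cases "e \<in> kept_edges")
      case False
      then have "cls (hv e) \<in> contracted" "cls (tv e) = cls (hv e)"
        using \<open>e \<in> E\<close> red_cls_eq_contracted unfolding kept_edges_def by auto
      moreover have "e \<in> induced (cls (hv e))"
        using \<open>e \<in> E\<close> mem_red_cls[of "hv e"] mem_red_cls[of "tv e"] calculation(2)
        unfolding induced_def by simp
      ultimately show ?thesis
        by blast
    qed simp
  qed
qed

lemma card_kept_Un_induced:
  assumes "A \<subseteq> kept_edges" "\<S> \<subseteq> contracted"
  shows "int (card (A \<union> \<Union>(induced ` \<S>)))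
    = int (card A) + 2 * (\<Sum>X\<in>\<S>. int (card X)) - int (card \<S>)"
proof -
  have "finite \<S>" "finite A"
    using finite_subset assms finite_contracted finite_kept_edges by blast+
  have "card (\<Union>(induced ` \<S>)) = (\<Sum>X\<in>\<S>. card (induced X))"
    using \<open>finite \<S>\<close> finite_induced induced_disjoint assms(2) by (intro card_UN_disjoint) auto
  moreover have "card (A \<union> \<Union>(induced ` \<S>)) = card A + card (\<Union>(induced ` \<S>))"
    using \<open>finite A\<close> \<open>finite \<S>\<close> finite_induced kept_edges_Int_induced assms
    by (intro card_Un_disjoint) auto
  moreover have "(\<Sum>X\<in>\<S>. int (card (induced X))) = (\<Sum>X\<in>\<S>. 2 * int (card X) - 1)"
    using card_induced_contracted assms(2) by (intro sum.cong) auto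
  ultimately show ?thesis
    by (simp add: sum_subtractf sum_distrib_left)
qed

lemma red_graph_colored: "colored_graph Vr Er hr tr"
  unfolding colored_graph_def
proof (intro conjI)
  show "finite Vr"
    unfolding red_V_def using finite_V by simp
  show "finite Er"
    unfolding red_E_eq using finite_kept_edges finite_contracted by simp
  show "\<forall>k\<in>Er. hr k \<in> Vr \<and> tr k \<in> Vr"
  proof
    fix k assume "k \<in> Er"
    then consider e where "k = Inl e" "e \<in> E" | X where "k = Inr X" "X \<in> contracted"
      unfolding red_E_eq kept_edges_def by blast
    then show "hr k \<in> Vr \<and> tr k \<in> Vr"
    proof cases
      case 1
      then show ?thesis
        unfolding red_V_def using edge_endpoints by simp
    next
      case 2
      then show ?thesis
        using contracted_subset_red_V by auto
    qed
  qed
qed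

lemma finite_red_subset: "K \<subseteq> Er \<Longrightarrow> finite K"
  using red_graph_colored finite_subset unfolding colored_graph_def by blast

lemma card_red_E: "int (card Er) = 2 * int (card Vr) - 1"
proof -
  have "card Er = card kept_edges + card contracted"
    unfolding red_E_eq using finite_kept_edges finite_contracted
    by (subst card_Un_disjoint) (auto simp: card_image)
  moreover have "int (card E) = int (card kept_edges) + 2 * (\<Sum>X\<in>contracted. int (card X))
      - int (card contracted)"
    using card_kept_Un_induced[of kept_edges contracted] edges_eq_kept_Un_induced by simp
  moreover have "\<Union>Vr = V"
  proof
    show "\<Union>Vr \<subseteq> V"
      unfolding red_V_def using red_cls_subset by auto
    show "V \<subseteq> \<Union>Vr"
      unfolding red_V_def using mem_red_cls by auto
  qed
  then have "card V = card (Vr - contracted) + (\<Sum>X\<in>contracted. card X)"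
    using card_Union_red_classes[of Vr] contracted_subset_red_V finite_V image_subset_iff[of cls V]
    unfolding red_V_def by (simp add: Int_absorb1)
  moreover have "card Vr = card (Vr - contracted) + card contracted"
    using card_Diff_subset[OF finite_contracted contracted_subset_red_V]
      card_mono[OF _ contracted_subset_red_V] finite_V unfolding red_V_def by simp
  ultimately show ?thesis
    using card_E by simp
qed

lemma verts_red_subset: "K \<subseteq> Er \<Longrightarrow> verts K hr tr \<subseteq> Vr"
  using red_graph_colored unfolding colored_graph_def verts_def by blast

lemma orig_edges_subset_kept: "K \<subseteq> Er \<Longrightarrow> {e. Inl e \<in> K} \<subseteq> kept_edges"
  unfolding red_E_eq by blast

definition lift :: "('e + 'v set) set \<Rightarrow> 'e set" where
  "lift K = {e. Inl e \<in> K} \<union> \<Union>(induced ` (verts K hr tr \<inter> contracted))"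

lemma lift_subset: "K \<subseteq> Er \<Longrightarrow> lift K \<subseteq> E"
  using orig_edges_subset_kept[of K] induced_subset unfolding lift_def kept_edges_def by blast

lemma verts_lift:
  assumes "K \<subseteq> Er"
  shows "verts (lift K) hv tv = \<Union>(verts K hr tr)"
proof
  show "verts (lift K) hv tv \<subseteq> \<Union>(verts K hr tr)"
  proof
    fix w assume "w \<in> verts (lift K) hv tv"
    then obtain e where e: "e \<in> lift K" "w = hv e \<or> w = tv e"
      unfolding verts_def by blast
    show "w \<in> \<Union>(verts K hr tr)"
    proof (cases "Inl e \<in> K")
      case True
      then have "cls (hv e) \<in> verts K hr tr" "cls (tv e) \<in> verts K hr tr"
        using imageI[of "Inl e" K hr] imageI[of "Inl e" K tr] unfolding verts_def by auto
      then show ?thesis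
        using e(2) mem_red_cls by blast
    next
      case False
      then obtain X where "X \<in> verts K hr tr" "e \<in> induced X"
        using e(1) unfolding lift_def by blast
      then show ?thesis
        using e(2) unfolding induced_def by blast
    qed
  qed
  show "\<Union>(verts K hr tr) \<subseteq> verts (lift K) hv tv"
  proof
    fix w assume "w \<in> \<Union>(verts K hr tr)"
    then obtain Q where Q: "Q \<in> verts K hr tr" "w \<in> Q"
      by blast
    show "w \<in> verts (lift K) hv tv"
    proof (cases "Q \<in> contracted")
      case True
      then have "verts (induced Q) hv tv \<subseteq> verts (lift K) hv tv"
        using Q(1) by (intro verts_mono) (auto simp: lift_def)
      then show ?thesis
        using contracted_set_circuit(4)[OF True] Q(2) by blast
    next
      case False
      obtain k where k: "k \<in> K" "Q = hr k \<or> Q = tr k"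
        using Q(1) unfolding verts_def by blast
      then obtain e where e: "k = Inl e"
        using assms False unfolding red_E_eq by auto
      then have "Q = cls (hv e) \<or> Q = cls (tv e)"
        using k(2) by simp
      then have "w = hv e \<or> w = tv e"
        using False Q(2) red_cls_not_contracted by auto
      moreover have "e \<in> lift K"
        using k(1) e unfolding lift_def by blast
      ultimately show ?thesis
        unfolding verts_def by blast
    qed
  qed
qed

lemma card_lift:
  assumes "K \<subseteq> Er"
  shows "int (card (lift K)) = int (card {e. Inl e \<in> K})
    + 2 * (\<Sum>X\<in>verts K hr tr \<inter> contracted. int (card X)) - int (card (verts K hr tr \<inter> contracted))"
  unfolding lift_def using orig_edges_subset_kept[OF assms] by (intro card_kept_Un_induced) auto

lemma card_Union_verts_red:
  assumes "K \<subseteq> Er" "finite K"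
  shows "card (\<Union>(verts K hr tr)) = card (verts K hr tr - contracted)
    + (\<Sum>X\<in>verts K hr tr \<inter> contracted. card X)"
  using verts_red_subset[OF assms(1)] finite_verts[OF assms(2)]
  by (intro card_Union_red_classes) (auto simp: red_V_def)

lemma card_verts_red:
  assumes "finite K"
  shows "card (verts K hr tr) = card (verts K hr tr - contracted) + card (verts K hr tr \<inter> contracted)"
  using finite_verts[OF assms] by (metis add.commute card_Int_Diff)

lemma card_red_edges:
  assumes "K \<subseteq> Er"
  shows "card K = card {e. Inl e \<in> K} + card {X. Inr X \<in> K}"
proof -
  have "K = {e. Inl e \<in> K} <+> {X. Inr X \<in> K}"
  proof (rule set_eqI)
    fix k show "k \<in> K \<longleftrightarrow> k \<in> {e. Inl e \<in> K} <+> {X. Inr X \<in> K}"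
      by (cases k) auto
  qed
  then have "card K = card ({e. Inl e \<in> K} <+> {X. Inr X \<in> K})"
    by (rule arg_cong)
  moreover have "finite {e. Inl e \<in> K}" "finite {X. Inr X \<in> K}"
    using assms finite_kept_edges finite_contracted unfolding red_E_eq
    by (auto intro: finite_subset)
  ultimately show ?thesis
    by (simp add: card_Plus)
qed

lemma new_loops_subset: "K \<subseteq> Er \<Longrightarrow> {X. Inr X \<in> K} \<subseteq> verts K hr tr \<inter> contracted"
  unfolding red_E_eq verts_def by force

lemma card_orig_edges_le:
  assumes "K \<subseteq> Er" "K \<noteq> {}"
  shows "int (card {e. Inl e \<in> K})
    \<le> 2 * int (card (verts K hr tr)) - int (card (verts K hr tr \<inter> contracted)) - 1"
proof -
  have "finite K"
    using finite_red_subset[OF assms(1)] .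
  obtain k where "k \<in> K"
    using assms(2) by blast
  have "lift K \<noteq> {}"
  proof (cases k)
    case (Inl e)
    then show ?thesis
      using \<open>k \<in> K\<close> unfolding lift_def by blast
  next
    case (Inr X)
    then have "X \<in> verts K hr tr \<inter> contracted"
      using new_loops_subset[OF assms(1)] \<open>k \<in> K\<close> by blast
    moreover have "induced X \<noteq> {}"
      using calculation card_induced_contracted contracted_set_circuit(2) by fastforce
    ultimately show ?thesis
      unfolding lift_def by blast
  qed
  then have "int (card (lift K)) \<le> 2 * int (card (\<Union>(verts K hr tr))) - 1"
    using card_le_laman[OF lift_subset[OF assms(1)]] verts_lift[OF assms(1)] by simp
  then show ?thesis
    using card_lift[OF assms(1)] card_Union_verts_red[OF assms(1) \<open>finite K\<close>]
      card_verts_red[OF \<open>finite K\<close>] by (simp add: sum_subtractf)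
qed

lemma card_red_le:
  assumes "K \<subseteq> Er" "K \<noteq> {}"
  shows "int (card K) \<le> 2 * int (card (verts K hr tr)) - 1"
proof -
  have "finite (verts K hr tr \<inter> contracted)"
    using finite_contracted by simp
  then have "card {X. Inr X \<in> K} \<le> card (verts K hr tr \<inter> contracted)"
    using card_mono new_loops_subset[OF assms(1)] by blast
  then show ?thesis
    using card_orig_edges_le[OF assms] card_red_edges[OF assms(1)] by linarith
qed

lemma orig_edges_trivial_rho:
  assumes "K \<subseteq> Er" and "\<not> nontrivial_rho K hr tr colr (verts K hr tr)"
  shows "\<not> nontrivial_rho {e. Inl e \<in> K} hv tv col (verts {e. Inl e \<in> K} hv tv)"
proof
  assume "nontrivial_rho {e. Inl e \<in> K} hv tv col (verts {e. Inl e \<in> K} hv tv)"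
  then obtain u es where u: "u \<in> verts {e. Inl e \<in> K} hv tv"
    and "walk {e. Inl e \<in> K} hv tv u es u" "odd (length (filter col es))"
    unfolding nontrivial_rho_def by blast
  then have "walk K hr tr (cls u) (map Inl es) (cls u)" "odd (length (filter colr (map Inl es)))"
    by (auto intro: walk_map)
  moreover have "cls u \<in> verts K hr tr"
    using u unfolding verts_def by force
  ultimately show False
    using assms(2) unfolding nontrivial_rho_def by blast
qed

lemma card_red_le_trivial_rho:
  assumes "K \<subseteq> Er" "K \<noteq> {}" and trivial: "\<not> nontrivial_rho K hr tr colr (verts K hr tr)"
  shows "int (card K) \<le> 2 * int (card (verts K hr tr)) - 2"
proof -
  have "finite K"
    using finite_red_subset[OF assms(1)] .
  have no_loops: "{X. Inr X \<in> K} = {}"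
  proof (rule ccontr)
    assume "{X. Inr X \<in> K} \<noteq> {}"
    then obtain X where "Inr X \<in> K"
      by blast
    then have "walk K hr tr X [Inr X] X"
      by (auto intro: walk.intros)
    moreover have "X \<in> verts K hr tr"
      using imageI[OF \<open>Inr X \<in> K\<close>, of hr] unfolding verts_def by auto
    ultimately show False
      using trivial unfolding nontrivial_rho_def by (force simp: red_col_def)
  qed
  show ?thesis
  proof (cases "verts K hr tr \<inter> contracted = {}")
    case False
    then have "card (verts K hr tr \<inter> contracted) \<ge> 1"
      using finite_contracted by (simp add: Suc_le_eq card_gt_0_iff)
    then show ?thesis
      using card_orig_edges_le[OF assms(1,2)] card_red_edges[OF assms(1)] no_loops by simp
  next
    case True
    let ?A = "{e. Inl e \<in> K}"
    have "lift K = ?A"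
      using True unfolding lift_def by simp
    then have verts_A: "verts ?A hv tv = \<Union>(verts K hr tr)"
      using verts_lift[OF assms(1)] by simp
    have "card (\<Union>(verts K hr tr)) = card (verts K hr tr)"
      using card_Union_verts_red[OF assms(1) \<open>finite K\<close>] card_verts_red[OF \<open>finite K\<close>] True by simp
    moreover have "?A \<noteq> {}"
      using card_red_edges[OF assms(1)] no_loops assms(2) \<open>finite K\<close> by auto
    then have "int (card ?A) \<le> 2 * int (card (verts ?A hv tv)) - 3"
      using sparse_cond_card_le_trivial_rho[OF sparse_13 _ _ _ _ orig_edges_trivial_rho[OF assms(1) trivial]]
        lift_subset[OF assms(1)] \<open>lift K = ?A\<close> finite_kept_edges orig_edges_subset_kept[OF assms(1)]
      by (simp add: finite_subset)
    ultimately show ?thesis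
      using card_red_edges[OF assms(1)] no_loops verts_A by simp
  qed
qed

lemma red_sparse_12: "sparse_cond 1 2 Er hr tr colr"
proof (rule sparse_cond_12_by_components)
  show "finite Er"
    using red_graph_colored unfolding colored_graph_def by blast
  fix F C assume "F \<subseteq> Er" "F \<noteq> {}" and C: "C \<in> components (verts F hr tr) F hr tr"
  let ?K = "{k \<in> F. hr k \<in> C}"
  have K: "?K \<subseteq> Er" "verts ?K hr tr = C"
    using \<open>F \<subseteq> Er\<close> verts_component_edges[OF C] by auto
  then have "?K \<noteq> {}"
    using component_nonempty[OF C] verts_empty_iff by metis
  note K = K this
  show "int (card ?K) \<le> 2 * int (card C) - (if nontrivial_rho F hr tr colr C then 1 else 2)"
  proof (cases "nontrivial_rho F hr tr colr C")
    case True
    then show ?thesis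
      using card_red_le[OF K(1,3)] K(2) by simp
  next
    case False
    then have "\<not> nontrivial_rho ?K hr tr colr (verts ?K hr tr)"
      unfolding K(2) nontrivial_rho_def by (blast dest: walk_mono)
    then show ?thesis
      using card_red_le_trivial_rho[OF K(1,3)] K(2) False by simp
  qed
qed

end

theorem proposition4:
  fixes V :: "'v set" and E :: "'e set" and hv tv :: "'e \<Rightarrow> 'v" and col :: "'e \<Rightarrow> bool"
  assumes "reflection_laman V E hv tv col"
  shows "reflection_22 (red_V V E hv tv col) (red_E V E hv tv col)
           (red_hd V E hv tv col) (red_tl V E hv tv col) (red_col col)"
proof -
  interpret reflection_laman_graph V E hv tv col
    using assms by unfold_locales
  show ?thesis
    unfolding reflection_22_def using red_graph_colored card_red_E red_sparse_12 by blast
qed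

end
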